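(* Let $G$ be a finite graph with edge set $E$, and let $P$ be a set of unordered pairs $\{e_1,e_2\}$ of distinct edges of $G$. Then there exist an integer $r$ with $0\le r\le |P|$, a set $F=\{f_1,\dots,f_r\}$ of new labels disjoint from $E$, and a real matrix $A$ with columns labelled by $E\cup F$ such that: (i) after a permutation of columns, $A$ has the block form $$A=\begin{pmatrix} I_{\mathrm{rk}\, G} & 0 & C \\ 0 & I_{r} & D \end{pmatrix},$$ where $\mathrm{rk}\, G$ is the rank of the cycle matroid of $G$ (number of vertices minus number of connected components), the columns of the middle block are those labelled by $F$, and every entry of $C$ and $D$ lies in $\{0,1,-1\}$; (ii) the matrix $(I_{\mathrm{rk}\, G}\,|\,C)$, with its columns labelled by $E$, represents the cycle matroid of $G$ over $\mathbb{R}$ (so the matroid represented by $A$ is a coextension of the cycle matroid of $G$, i.e. contracting $F$ in it gives the cycle matroid of $G$); (iii) for every pair $\{e_1,e_2\}\in P$ there exist a column label $g\in E\cup F$ and nonzero real numbers $\alpha,\beta$ such that every vector $x\in\mathbb{R}^{E\cup F}$ with $Ax=0$ satisfies $x_g=\alpha x_{e_1}+\beta x_{e_2}$ (that is, the "momentum" of $g$ is a linear combination with both weights nonzero of the momenta of $e_1$ and $e_2$).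
   Context: A matroid on a finite set $E$ is given by its set of circuits. A real matrix with columns labelled by $E$ represents the matroid whose circuits are the minimal linearly dependent sets of columns. The cycle matroid of a graph $G$ has ground set the edge set and circuits the cycles of $G$; it is represented by the (directed) incidence matrix of $G$. A matroid $M$ on $E\cup F$ is a coextension of a matroid $N$ on $E$ if $N$ is obtained from $M$ by contracting $F$. Physically, the kernel of the representing matrix parametrizes assignments of momenta to edges satisfying momentum conservation (rows = momentum-conserving sets), and the set $P$ records pairs of edges whose momenta appear dotted together in the numerator of a Feynman integral; each new element of $F$ corresponds to an extra propagator whose momentum is a linear combination of the momenta of a pair in $P$. *)

theory Defs
  imports Complex_Main
begin

text \<open>A finite (multi)graph: finite vertex set V, finite edge set E, and each edge e
  has a set of end vertices ends e with one element (a loop) or two elements.\<close>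
definition finite_graph :: "'v set \<Rightarrow> 'e set \<Rightarrow> ('e \<Rightarrow> 'v set) \<Rightarrow> bool" where
  "finite_graph V E ends \<longleftrightarrow> finite V \<and> finite E \<and>
     (\<forall>e\<in>E. ends e \<subseteq> V \<and> (card (ends e) = 1 \<or> card (ends e) = 2))"

definition adj_rel :: "'e set \<Rightarrow> ('e \<Rightarrow> 'v set) \<Rightarrow> ('v \<times> 'v) set" where
  "adj_rel E ends = {(u, v). \<exists>e\<in>E. u \<in> ends e \<and> v \<in> ends e}"

definition components :: "'v set \<Rightarrow> 'e set \<Rightarrow> ('e \<Rightarrow> 'v set) \<Rightarrow> 'v set set" where
  "components V E ends = V // ((adj_rel E ends)\<^sup>*)"

definition graph_rank :: "'v set \<Rightarrow> 'e set \<Rightarrow> ('e \<Rightarrow> 'v set) \<Rightarrow> nat" where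
  "graph_rank V E ends = card V - card (components V E ends)"

definition is_cycle :: "'e set \<Rightarrow> ('e \<Rightarrow> 'v set) \<Rightarrow> 'e set \<Rightarrow> bool" where
  "is_cycle E ends S \<longleftrightarrow>
     (\<exists>vs es. length vs = length es \<and> length es \<ge> 1 \<and> distinct vs \<and> distinct es \<and>
        set es \<subseteq> E \<and> S = set es \<and>
        (\<forall>i < length es. ends (es ! i) = {vs ! i, vs ! ((i + 1) mod length es)}))"

definition cols_dependent :: "nat \<Rightarrow> (nat \<Rightarrow> 'c \<Rightarrow> real) \<Rightarrow> 'c set \<Rightarrow> bool" where
  "cols_dependent m M S \<longleftrightarrow>
     (\<exists>c :: 'c \<Rightarrow> real. (\<exists>s\<in>S. c s \<noteq> 0) \<and> (\<forall>i<m. (\<Sum>s\<in>S. c s * M i s) = 0))"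

definition matrix_circuit :: "nat \<Rightarrow> (nat \<Rightarrow> 'c \<Rightarrow> real) \<Rightarrow> 'c set \<Rightarrow> bool" where
  "matrix_circuit m M S \<longleftrightarrow> cols_dependent m M S \<and> (\<forall>T. T \<subset> S \<longrightarrow> \<not> cols_dependent m M T)"

definition represents :: "nat \<Rightarrow> (nat \<Rightarrow> 'c \<Rightarrow> real) \<Rightarrow> 'c set \<Rightarrow> ('c set \<Rightarrow> bool) \<Rightarrow> bool" where
  "represents m M X circ \<longleftrightarrow> (\<forall>S. S \<subseteq> X \<longrightarrow> (circ S \<longleftrightarrow> matrix_circuit m M S))"

end

theory Submission
  imports Defs
begin

(*
  Fix a spanning forest of G with a root in every component. For a non-root vertex c, the
  coboundary of the set of descendants of c is the fundamental cut of the forest edge from c to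
  its parent; signed to be 1 on that edge, these rows form a ternary matrix M in standard form.
  The incidence row of a vertex v is the coboundary of the descendants of v minus those of its
  children, and the coboundary of a whole component vanishes, so M has the kernel of the incidence
  matrix (the flows). Hence M represents the cycle matroid, whose circuits are the minimal
  supports of flows.

  In the kernel of M the row of a forest edge a expresses x a through non-forest edges, which
  yields a row w a vanishing on the forest with w a . x = - x a for all kernel vectors x; for a
  non-forest edge, w a is minus the unit vector at a. A pair {a, b} in P gets a new column f and
  the row alpha w a + beta w b + 1_f, which forces x f = - alpha x a - beta x b. Descendant sets
  are nested or disjoint, so alpha, beta can be chosen in {-1, 1} keeping the new row ternary.
*)

section \<open>Adjoining one column per pair\<close>

definition in_kernel :: "nat \<Rightarrow> (nat \<Rightarrow> 'c \<Rightarrow> real) \<Rightarrow> 'c set \<Rightarrow> ('c \<Rightarrow> real) \<Rightarrow> bool" where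
  "in_kernel m M X x \<longleftrightarrow> (\<forall>i<m. (\<Sum>c\<in>X. M i c * x c) = 0)"

definition standard_form :: "nat \<Rightarrow> (nat \<Rightarrow> 'e \<Rightarrow> real) \<Rightarrow> 'e set \<Rightarrow> 'e set \<Rightarrow> (nat \<Rightarrow> 'e) \<Rightarrow> bool"
  where
  "standard_form m M E E1 \<sigma> \<longleftrightarrow> E1 \<subseteq> E \<and> bij_betw \<sigma> {..<m} E1 \<and>
     (\<forall>k<m. \<forall>i<m. M i (\<sigma> k) = (if i = k then 1 else 0)) \<and>
     (\<forall>e\<in>E - E1. \<forall>i<m. M i e \<in> {-1, 0, 1})"

definition pair_row ::
    "nat \<Rightarrow> (nat \<Rightarrow> 'e \<Rightarrow> real) \<Rightarrow> 'e set \<Rightarrow> 'e set \<Rightarrow> 'e \<Rightarrow> 'e \<Rightarrow> ('e \<Rightarrow> real) \<Rightarrow> bool" where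
  "pair_row m M E E1 a b u \<longleftrightarrow> (\<forall>e\<in>E1. u e = 0) \<and> (\<forall>e\<in>E - E1. u e \<in> {-1, 0, 1}) \<and>
     (\<exists>\<alpha> \<beta>. \<alpha> \<noteq> 0 \<and> \<beta> \<noteq> 0 \<and>
        (\<forall>y. in_kernel m M E y \<longrightarrow> (\<Sum>e\<in>E. u e * y e) = \<alpha> * y a + \<beta> * y b))"

lemma represents_cong:
  assumes "\<forall>i<m. \<forall>e. M1 i e = M2 i e"
  shows "represents m M1 X circ \<longleftrightarrow> represents m M2 X circ"
proof -
  have "cols_dependent m M1 S \<longleftrightarrow> cols_dependent m M2 S" for S
    unfolding cols_dependent_def using assms by simp
  then show ?thesis unfolding represents_def matrix_circuit_def by simp
qed

lemma sum_Inl_Inr: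
  assumes "finite E"
  shows "(\<Sum>c\<in>Inl ` E \<union> Inr ` {..<(r::nat)}. f c) = (\<Sum>e\<in>E. f (Inl e)) + (\<Sum>j<r. f (Inr j))"
  using assms by (subst sum.union_disjoint) (auto simp: sum.reindex)

definition coextension_matrix ::
    "nat \<Rightarrow> (nat \<Rightarrow> 'e \<Rightarrow> real) \<Rightarrow> (nat \<Rightarrow> 'e \<Rightarrow> real) \<Rightarrow> nat \<Rightarrow> 'e + nat \<Rightarrow> real" where
  "coextension_matrix m M U i c =
     (case c of Inl e \<Rightarrow> if i < m then M i e else U (i - m) e | Inr j \<Rightarrow> if i = m + j then 1 else 0)"

lemma coextension_matrix_blocks:
  assumes "standard_form m M E E1 \<sigma>" "\<forall>j<r. \<forall>e\<in>E1. U j e = 0" "\<forall>j<r. \<forall>e\<in>E - E1. U j e \<in> {-1, 0, 1}"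
  shows "\<forall>k<m. \<forall>i<m + r. coextension_matrix m M U i (Inl (\<sigma> k)) = (if i = k then 1 else 0)"
    and "\<forall>j<r. \<forall>i<m + r. coextension_matrix m M U i (Inr j) = (if i = m + j then 1 else 0)"
    and "\<forall>e\<in>E - E1. \<forall>i<m + r. coextension_matrix m M U i (Inl e) \<in> {-1, 0, 1}"
proof -
  have "\<sigma> k \<in> E1" if "k < m" for k
    using assms(1) that bij_betwE unfolding standard_form_def by blast
  then show "\<forall>k<m. \<forall>i<m + r. coextension_matrix m M U i (Inl (\<sigma> k)) = (if i = k then 1 else 0)"
    using assms(1,2) unfolding standard_form_def coextension_matrix_def by auto
  show "\<forall>j<r. \<forall>i<m + r. coextension_matrix m M U i (Inr j) = (if i = m + j then 1 else 0)"
    by (simp add: coextension_matrix_def)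
  show "\<forall>e\<in>E - E1. \<forall>i<m + r. coextension_matrix m M U i (Inl e) \<in> {-1, 0, 1}"
    using assms(1,3) unfolding standard_form_def coextension_matrix_def by auto
qed

lemma represents_coextension_matrix:
  "represents m M E circ \<Longrightarrow> represents m (\<lambda>i e. coextension_matrix m M U i (Inl e)) E circ"
  using represents_cong[of m "\<lambda>i e. coextension_matrix m M U i (Inl e)" M]
  unfolding coextension_matrix_def by simp

lemma in_kernel_coextension_matrix:
  assumes "finite E" "in_kernel (m + r) (coextension_matrix m M U) (Inl ` E \<union> Inr ` {..<r}) x"
  shows "in_kernel m M E (\<lambda>e. x (Inl e))"
    and "j < r \<Longrightarrow> x (Inr j) = - (\<Sum>e\<in>E. U j e * x (Inl e))"
proof -
  let ?A = "coextension_matrix m M U"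
  show "in_kernel m M E (\<lambda>e. x (Inl e))"
    unfolding in_kernel_def
  proof (intro allI impI)
    fix i assume "i < m"
    then have "(\<Sum>c\<in>Inl ` E \<union> Inr ` {..<r}. ?A i c * x c) = (\<Sum>e\<in>E. M i e * x (Inl e))"
      by (simp add: sum_Inl_Inr[OF assms(1)] coextension_matrix_def)
    then show "(\<Sum>e\<in>E. M i e * x (Inl e)) = 0" using assms(2) \<open>i < m\<close> unfolding in_kernel_def by simp
  qed
  assume j: "j < r"
  have "(\<Sum>c\<in>Inl ` E \<union> Inr ` {..<r}. ?A (m + j) c * x c) =
      (\<Sum>e\<in>E. ?A (m + j) (Inl e) * x (Inl e)) + (\<Sum>j'<r. ?A (m + j) (Inr j') * x (Inr j'))"
    by (rule sum_Inl_Inr[OF assms(1)])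
  also have "(\<Sum>e\<in>E. ?A (m + j) (Inl e) * x (Inl e)) = (\<Sum>e\<in>E. U j e * x (Inl e))"
    by (simp add: coextension_matrix_def)
  also have "(\<Sum>j'<r. ?A (m + j) (Inr j') * x (Inr j')) = (\<Sum>j'<r. if j' = j then x (Inr j') else 0)"
    unfolding coextension_matrix_def by (intro sum.cong) auto
  also have "\<dots> = x (Inr j)"
    using j by simp
  finally show "x (Inr j) = - (\<Sum>e\<in>E. U j e * x (Inl e))"
    using assms(2) j unfolding in_kernel_def by simp
qed

lemma pair_row_swap: "pair_row m M E E1 a b u \<Longrightarrow> pair_row m M E E1 b a u"
  unfolding pair_row_def by (metis add.commute)

lemma pair_row_doubleton: "{a, b} = {a', b'} \<Longrightarrow> pair_row m M E E1 a b u \<Longrightarrow> pair_row m M E E1 a' b' u"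
  using pair_row_swap by (metis doubleton_eq_iff)

lemma coextension_matrix_pair_column:
  assumes "finite E" "j < r" "pair_row m M E E1 a b (U j)"
  shows "\<exists>\<alpha> \<beta>. \<alpha> \<noteq> 0 \<and> \<beta> \<noteq> 0 \<and> (\<forall>x. in_kernel (m + r) (coextension_matrix m M U) (Inl ` E \<union> Inr ` {..<r}) x
           \<longrightarrow> x (Inr j) = \<alpha> * x (Inl a) + \<beta> * x (Inl b))"
proof -
  obtain \<alpha> \<beta> where "\<alpha> \<noteq> 0" "\<beta> \<noteq> 0"
    and row: "\<forall>y. in_kernel m M E y \<longrightarrow> (\<Sum>e\<in>E. U j e * y e) = \<alpha> * y a + \<beta> * y b"
    using assms(3) unfolding pair_row_def by blast
  moreover have "x (Inr j) = - \<alpha> * x (Inl a) + - \<beta> * x (Inl b)"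
    if "in_kernel (m + r) (coextension_matrix m M U) (Inl ` E \<union> Inr ` {..<r}) x" for x
    using in_kernel_coextension_matrix[OF assms(1) that] assms(2) row by simp
  ultimately show ?thesis by (intro exI[of _ "- \<alpha>"] exI[of _ "- \<beta>"]) auto
qed

lemma ternary_coextension:
  fixes M :: "nat \<Rightarrow> 'e \<Rightarrow> real" and P :: "'e set set"
  assumes "finite E" "finite P" and std: "standard_form m M E E1 \<sigma>" and rep: "represents m M E circ"
    and rows: "\<forall>p\<in>P. \<exists>a b u. p = {a, b} \<and> pair_row m M E E1 a b u"
  shows "\<exists>(r::nat) (A :: nat \<Rightarrow> 'e + nat \<Rightarrow> real) (E1' :: 'e set) (\<sigma>' :: nat \<Rightarrow> 'e).
     r \<le> card P \<and> E1' \<subseteq> E \<and> bij_betw \<sigma>' {..<m} E1' \<and>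
     (\<forall>k<m. \<forall>i<m + r. A i (Inl (\<sigma>' k)) = (if i = k then 1 else 0)) \<and>
     (\<forall>j<r. \<forall>i<m + r. A i (Inr j) = (if i = m + j then 1 else 0)) \<and>
     (\<forall>e\<in>E - E1'. \<forall>i<m + r. A i (Inl e) \<in> {-1, 0, 1}) \<and>
     represents m (\<lambda>i e. A i (Inl e)) E circ \<and>
     (\<forall>e1 e2. {e1, e2} \<in> P \<longrightarrow> (\<exists>g \<in> Inl ` E \<union> Inr ` {..<r}. \<exists>\<alpha> \<beta> :: real. \<alpha> \<noteq> 0 \<and> \<beta> \<noteq> 0 \<and>
        (\<forall>x :: 'e + nat \<Rightarrow> real. (\<forall>i<m + r. (\<Sum>c\<in>Inl ` E \<union> Inr ` {..<r}. A i c * x c) = 0) \<longrightarrow>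
           x g = \<alpha> * x (Inl e1) + \<beta> * x (Inl e2))))"
proof -
  define r where "r = card P"
  obtain \<pi> where \<pi>: "bij_betw \<pi> {..<r} P"
    using ex_bij_betw_nat_finite[OF \<open>finite P\<close>] unfolding r_def by (auto simp: atLeast0LessThan)
  have \<pi>P: "j < r \<Longrightarrow> \<pi> j \<in> P" for j using \<pi> bij_betwE by blast
  have "\<forall>j\<in>{..<r}. \<exists>a b u. \<pi> j = {a, b} \<and> pair_row m M E E1 a b u" using rows \<pi>P by blast
  then obtain a b u where row: "\<forall>j\<in>{..<r}. \<pi> j = {a j, b j} \<and> pair_row m M E E1 (a j) (b j) (u j)"
    unfolding bchoice_iff by blast
  define A where "A = coextension_matrix m M u"
  have pairs: "\<forall>e1 e2. {e1, e2} \<in> P \<longrightarrow> (\<exists>g \<in> Inl ` E \<union> Inr ` {..<r}. \<exists>\<alpha> \<beta> :: real. \<alpha> \<noteq> 0 \<and> \<beta> \<noteq> 0 \<and>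
      (\<forall>x. in_kernel (m + r) A (Inl ` E \<union> Inr ` {..<r}) x \<longrightarrow> x g = \<alpha> * x (Inl e1) + \<beta> * x (Inl e2)))"
  proof (intro allI impI)
    fix e1 e2 assume "{e1, e2} \<in> P"
    then have "{e1, e2} \<in> \<pi> ` {..<r}" using \<pi> by (simp add: bij_betw_imp_surj_on)
    then obtain j where j: "j < r" "\<pi> j = {e1, e2}" by auto
    have "\<pi> j = {a j, b j}" "pair_row m M E E1 (a j) (b j) (u j)" using row j(1) by auto
    then have "pair_row m M E E1 e1 e2 (u j)" using j(2) pair_row_doubleton by metis
    then show "\<exists>g \<in> Inl ` E \<union> Inr ` {..<r}. \<exists>\<alpha> \<beta> :: real. \<alpha> \<noteq> 0 \<and> \<beta> \<noteq> 0 \<and>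
      (\<forall>x. in_kernel (m + r) A (Inl ` E \<union> Inr ` {..<r}) x \<longrightarrow> x g = \<alpha> * x (Inl e1) + \<beta> * x (Inl e2))"
      using coextension_matrix_pair_column[OF \<open>finite E\<close> j(1)] j(1) unfolding A_def by blast
  qed
  have "\<forall>j<r. \<forall>e\<in>E1. u j e = 0" "\<forall>j<r. \<forall>e\<in>E - E1. u j e \<in> {-1, 0, 1}"
    using row unfolding pair_row_def by auto
  note blocks = coextension_matrix_blocks[OF std this, folded A_def]
  have "r \<le> card P" "E1 \<subseteq> E" "bij_betw \<sigma> {..<m} E1" using std unfolding r_def standard_form_def by auto
  with blocks represents_coextension_matrix[OF rep, of u, folded A_def] pairs[unfolded in_kernel_def]
  show ?thesis by (intro exI[of _ r] exI[of _ A] exI[of _ E1] exI[of _ \<sigma>] conjI) assumption+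
qed

section \<open>Flows and cycles\<close>

lemma doubleton_if_card_le_2:
  assumes "finite S" "card S \<le> 2" "a \<in> S" "b \<in> S" "a \<noteq> b"
  shows "S = {a, b}"
proof -
  have "{a, b} \<subseteq> S" "card {a, b} = 2" using assms by auto
  then show ?thesis using assms(1,2) by (metis card_seteq)
qed

lemma Suc_mod_inj: "a < (n::nat) \<Longrightarrow> b < n \<Longrightarrow> (a + 1) mod n = (b + 1) mod n \<Longrightarrow> a = b"
  by (auto simp: mod_if split: if_splits)

lemma Suc_mod_neq: "a < (n::nat) \<Longrightarrow> 2 \<le> n \<Longrightarrow> (a + 1) mod n \<noteq> a"
  by (auto simp: mod_if split: if_splits)

lemma sum_rotate:
  assumes "0 < (n::nat)"
  shows "(\<Sum>l<n. f ((l + 1) mod n)) = (\<Sum>l<n. f l)"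
proof -
  have "inj_on (\<lambda>l. (l + 1) mod n) {..<n}" by (rule inj_onI) (use Suc_mod_inj in blast)
  moreover have "(\<lambda>l. (l + 1) mod n) ` {..<n} \<subseteq> {..<n}" using assms by auto
  ultimately have "bij_betw (\<lambda>l. (l + 1) mod n) {..<n} {..<n}"
    unfolding bij_betw_def by (simp add: endo_inj_surj)
  then show ?thesis by (rule sum.reindex_bij_betw)
qed

locale multigraph =
  fixes V :: "'v set" and E :: "'e set" and ends :: "'e \<Rightarrow> 'v set"
  assumes finite_graph: "finite_graph V E ends"
begin

lemma finite_V: "finite V"
  and finite_E: "finite E"
  and ends_subset: "e \<in> E \<Longrightarrow> ends e \<subseteq> V"
  and card_ends: "e \<in> E \<Longrightarrow> card (ends e) = 1 \<or> card (ends e) = 2"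
  using finite_graph unfolding finite_graph_def by auto

lemma finite_ends: "e \<in> E \<Longrightarrow> finite (ends e)"
  using card_ends card.infinite by fastforce

lemma ends_eq_doubleton: "e \<in> E \<Longrightarrow> u \<in> ends e \<Longrightarrow> v \<in> ends e \<Longrightarrow> u \<noteq> v \<Longrightarrow> ends e = {u, v}"
  using card_ends finite_ends by (intro doubleton_if_card_le_2) fastforce+

definition tail :: "'e \<Rightarrow> 'v" where
  "tail e = (SOME u. u \<in> ends e)"

definition head :: "'e \<Rightarrow> 'v" where
  "head e = (SOME v. ends e = {tail e, v})"

lemma ends_tail_head: assumes "e \<in> E" shows "ends e = {tail e, head e}"
proof -
  have "ends e \<noteq> {}" using card_ends[OF assms] by auto
  then have tail: "tail e \<in> ends e" unfolding tail_def by (metis ex_in_conv someI_ex)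
  have "\<exists>v. ends e = {tail e, v}"
  proof (cases "\<exists>v\<in>ends e. v \<noteq> tail e")
    case True
    then show ?thesis using ends_eq_doubleton[OF assms tail] by blast
  next
    case False
    then show ?thesis using tail by blast
  qed
  then show ?thesis unfolding head_def by (rule someI_ex)
qed

lemma tail_in_V: "e \<in> E \<Longrightarrow> tail e \<in> V"
  and head_in_V: "e \<in> E \<Longrightarrow> head e \<in> V"
  using ends_tail_head ends_subset by blast+

definition incidence :: "'v \<Rightarrow> 'e \<Rightarrow> real" where
  "incidence v e = (if tail e = v then 1 else 0) - (if head e = v then 1 else 0)"

lemma incidence_eq_0: "e \<in> E \<Longrightarrow> v \<notin> ends e \<Longrightarrow> incidence v e = 0"
  unfolding incidence_def using ends_tail_head by auto

lemma incidence_neq_0: "e \<in> E \<Longrightarrow> v \<in> ends e \<Longrightarrow> tail e \<noteq> head e \<Longrightarrow> incidence v e \<noteq> 0"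
  unfolding incidence_def using ends_tail_head by auto

definition flow :: "('e \<Rightarrow> real) \<Rightarrow> bool" where
  "flow x \<longleftrightarrow> (\<forall>v\<in>V. (\<Sum>e\<in>E. incidence v e * x e) = 0)"

definition flow_dependent :: "'e set \<Rightarrow> bool" where
  "flow_dependent S \<longleftrightarrow> (\<exists>x. flow x \<and> (\<forall>e. e \<notin> S \<longrightarrow> x e = 0) \<and> (\<exists>s\<in>S. x s \<noteq> 0))"

lemma flow_conservation_local:
  assumes "flow x" "\<forall>e. e \<notin> S \<longrightarrow> x e = 0" "w \<in> V" "F \<subseteq> E" "\<forall>e\<in>S. w \<in> ends e \<longrightarrow> e \<in> F"
  shows "(\<Sum>e\<in>F. incidence w e * x e) = 0"
proof -
  have "(\<Sum>e\<in>F. incidence w e * x e) = (\<Sum>e\<in>E. incidence w e * x e)"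
    using assms(2,5) incidence_eq_0 by (intro sum.mono_neutral_left[OF finite_E assms(4)]) auto
  then show ?thesis using assms(1,3) unfolding flow_def by simp
qed

definition cycle_walk :: "'v list \<Rightarrow> 'e list \<Rightarrow> bool" where
  "cycle_walk vs es \<longleftrightarrow> length vs = length es \<and> length es \<ge> 1 \<and> distinct vs \<and> distinct es \<and>
     set es \<subseteq> E \<and> (\<forall>i < length es. ends (es ! i) = {vs ! i, vs ! ((i + 1) mod length es)})"

lemma is_cycle_iff_cycle_walk: "is_cycle E ends S \<longleftrightarrow> (\<exists>vs es. cycle_walk vs es \<and> S = set es)"
  unfolding is_cycle_def cycle_walk_def by blast

lemma cycle_walk_flow_dependent:
  assumes "cycle_walk vs es"
  shows "flow_dependent (set es)"
proof -
  define n where "n = length es"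
  define sgn where "sgn l = (if tail (es ! l) = vs ! l then 1 else -1 :: real)" for l
  define x where "x e = (\<Sum>l<n. if es ! l = e then sgn l else 0)" for e
  have n: "0 < n" and es_E: "l < n \<Longrightarrow> es ! l \<in> E" for l
    using assms unfolding cycle_walk_def n_def by auto
  have signed_incidence: "sgn l * incidence v (es ! l) =
      (if v = vs ! l then 1 else 0) - (if v = vs ! ((l + 1) mod n) then 1 else 0)" if "l < n" for l v
  proof -
    have "{tail (es ! l), head (es ! l)} = {vs ! l, vs ! ((l + 1) mod n)}"
      using assms ends_tail_head[OF es_E[OF that]] that unfolding cycle_walk_def n_def by metis
    then show ?thesis unfolding sgn_def incidence_def doubleton_eq_iff by auto
  qed
  have "flow x" unfolding flow_def
  proof
    fix v assume "v \<in> V"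
    have "(\<Sum>e\<in>E. incidence v e * x e) = (\<Sum>l<n. \<Sum>e\<in>E. if es ! l = e then incidence v e * sgn l else 0)"
      unfolding x_def sum_distrib_left by (subst sum.swap) (intro sum.cong refl, simp)
    also have "\<dots> = (\<Sum>l<n. sgn l * incidence v (es ! l))"
      using es_E finite_E by (intro sum.cong refl) (simp add: sum.delta' mult.commute)
    also have "\<dots> = (\<Sum>l<n. if v = vs ! l then 1 else 0) - (\<Sum>l<n. if v = vs ! ((l + 1) mod n) then 1 else 0)"
      using signed_incidence by (simp add: sum_subtractf)
    also have "\<dots> = 0"
      using sum_rotate[OF n, of "\<lambda>l. if v = vs ! l then 1 else 0 :: real"] by simp
    finally show "(\<Sum>e\<in>E. incidence v e * x e) = 0" .
  qed
  moreover have "\<forall>e. e \<notin> set es \<longrightarrow> x e = 0"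
    unfolding x_def n_def using nth_mem by (fastforce intro!: sum.neutral)
  moreover have "x (es ! 0) = sgn 0"
  proof -
    have "x (es ! 0) = (\<Sum>l<n. if l = 0 then sgn l else 0)"
      unfolding x_def using assms n unfolding cycle_walk_def n_def
      by (intro sum.cong) (auto simp: nth_eq_iff_index_eq)
    then show ?thesis using n by simp
  qed
  then have "x (es ! 0) \<noteq> 0" unfolding sgn_def by simp
  moreover have "es ! 0 \<in> set es" using n n_def by simp
  ultimately show ?thesis unfolding flow_dependent_def by blast
qed

lemma cycle_walk_edge_at_vertex:
  assumes "cycle_walk vs es" "j < length es" "l < length es" "vs ! j \<in> ends (es ! l)"
  shows "l = j \<or> (l + 1) mod length es = j"
proof -
  have "vs ! j = vs ! l \<or> vs ! j = vs ! ((l + 1) mod length es)"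
    using assms unfolding cycle_walk_def by auto
  moreover have "(l + 1) mod length es < length es"
    by (rule mod_less_divisor) (use assms(3) in linarith)
  ultimately show ?thesis
    using assms(1-3) unfolding cycle_walk_def by (auto simp: nth_eq_iff_index_eq)
qed

lemma cycle_walk_loopless:
  assumes "cycle_walk vs es" "2 \<le> length es" "j < length es"
  shows "tail (es ! j) \<noteq> head (es ! j)"
proof -
  have ends: "ends (es ! j) = {vs ! j, vs ! ((j + 1) mod length es)}" and "es ! j \<in> E"
    using assms unfolding cycle_walk_def by auto
  have "(j + 1) mod length es < length es" by (rule mod_less_divisor) (use assms(3) in linarith)
  then have "vs ! j \<noteq> vs ! ((j + 1) mod length es)"
    using assms Suc_mod_neq[OF assms(3,2)] unfolding cycle_walk_def by (simp add: nth_eq_iff_index_eq)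
  then show ?thesis using ends_tail_head[OF \<open>es ! j \<in> E\<close>] ends by (auto simp: doubleton_eq_iff)
qed

text \<open>Conservation at the vertex shared by two consecutive cycle edges.\<close>
lemma cycle_walk_flow_zero_next:
  assumes cw: "cycle_walk vs es" and x: "flow x" "\<forall>e. e \<notin> set es \<longrightarrow> x e = 0"
    and i: "i < length es" and xi: "x (es ! i) = 0"
  shows "x (es ! ((i + 1) mod length es)) = 0"
proof (cases "length es = 1")
  case True
  then show ?thesis using xi i by simp
next
  case False
  define n where "n = length es"
  have n2: "2 \<le> n" using False cw unfolding cycle_walk_def n_def by linarith
  have es_E: "l < n \<Longrightarrow> es ! l \<in> E"
    and ends_es: "l < n \<Longrightarrow> ends (es ! l) = {vs ! l, vs ! ((l + 1) mod n)}" for l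
    using cw unfolding cycle_walk_def n_def by auto
  define j where "j = (i + 1) mod n"
  have j: "j < n" "j \<noteq> i" using j_def n2 Suc_mod_neq[OF i[folded n_def] n2] by auto
  have "vs ! j \<in> V" using ends_es[OF j(1)] es_E[OF j(1)] ends_subset by blast
  moreover have "\<forall>e\<in>set es. vs ! j \<in> ends e \<longrightarrow> e \<in> {es ! i, es ! j}"
  proof (intro ballI impI)
    fix e assume "e \<in> set es" "vs ! j \<in> ends e"
    then obtain l where "l < n" "e = es ! l" "vs ! j \<in> ends (es ! l)"
      using in_set_conv_nth n_def by metis
    then show "e \<in> {es ! i, es ! j}"
      using cycle_walk_edge_at_vertex[OF cw] Suc_mod_inj[OF _ i] j(1) n_def j_def by fastforce
  qed
  ultimately have "(\<Sum>e\<in>{es ! i, es ! j}. incidence (vs ! j) e * x e) = 0"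
    using es_E i j n_def by (intro flow_conservation_local[OF x]) auto
  moreover have "es ! i \<noteq> es ! j"
    using cw i j unfolding cycle_walk_def n_def by (simp add: nth_eq_iff_index_eq)
  ultimately have "incidence (vs ! j) (es ! j) * x (es ! j) = 0" using xi by simp
  moreover have "incidence (vs ! j) (es ! j) \<noteq> 0"
    using incidence_neq_0[OF es_E[OF j(1)]] ends_es[OF j(1)] cycle_walk_loopless[OF cw] n2 j(1) n_def
    by simp
  ultimately show ?thesis using j_def n_def by simp
qed

lemma cycle_walk_flow_vanishes:
  assumes cw: "cycle_walk vs es" and x: "flow x" "\<forall>e. e \<notin> set es \<longrightarrow> x e = 0"
    and k: "k < length es" "x (es ! k) = 0"
  shows "\<forall>s\<in>set es. x s = 0"
proof -
  define n where "n = length es"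
  have around: "x (es ! ((k + m) mod n)) = 0" for m
  proof (induction m)
    case 0
    then show ?case using k n_def by simp
  next
    case (Suc m)
    have "(k + Suc m) mod n = ((k + m) mod n + 1) mod n" by (simp add: mod_Suc_eq)
    moreover have "(k + m) mod n < n" by (rule mod_less_divisor) (use k n_def in linarith)
    ultimately show ?case using cycle_walk_flow_zero_next[OF cw x _ Suc] n_def by simp
  qed
  show ?thesis
  proof
    fix s assume "s \<in> set es"
    then obtain l where l: "l < n" "s = es ! l" using in_set_conv_nth n_def by metis
    then have "(k + (n - k + l)) mod n = l" using k n_def by simp
    then show "x s = 0" using around[of "n - k + l"] l by simp
  qed
qed

lemma cycle_walk_minimal:
  assumes "cycle_walk vs es" "T \<subset> set es"
  shows "\<not> flow_dependent T"
proof
  assume "flow_dependent T"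
  then obtain x where x: "flow x" "\<forall>e. e \<notin> T \<longrightarrow> x e = 0" "\<exists>s\<in>T. x s \<noteq> 0"
    unfolding flow_dependent_def by blast
  obtain e where "e \<in> set es" "e \<notin> T" using assms(2) by blast
  then obtain k where "k < length es" "es ! k \<notin> T" by (metis in_set_conv_nth)
  then have "\<forall>s\<in>set es. x s = 0"
    using x(2) assms(2) by (intro cycle_walk_flow_vanishes[OF assms(1) x(1)]) auto
  then show False using x(3) assms(2) by blast
qed

definition is_path :: "'e set \<Rightarrow> 'v list \<Rightarrow> 'e list \<Rightarrow> bool" where
  "is_path S vs es \<longleftrightarrow> length vs = Suc (length es) \<and> length es \<ge> 1 \<and> distinct vs \<and> distinct es \<and>
     set es \<subseteq> S \<and> (\<forall>i < length es. ends (es ! i) = {vs ! i, vs ! Suc i})"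

lemma is_path_length_less_card:
  assumes "S \<subseteq> E" "is_path S vs es"
  shows "length es < card V"
proof -
  have "set vs \<subseteq> V"
  proof
    fix v assume "v \<in> set vs"
    then obtain i where i: "i < length vs" "v = vs ! i" by (metis in_set_conv_nth)
    define l where "l = min i (length es - 1)"
    have l: "l < length es" "i = l \<or> i = Suc l"
      using assms(2) i unfolding is_path_def l_def by auto
    then have "v \<in> ends (es ! l)" using assms(2) i unfolding is_path_def by auto
    moreover have "es ! l \<in> E" using assms l(1) nth_mem unfolding is_path_def by blast
    ultimately show "v \<in> V" using ends_subset by blast
  qed
  then have "card (set vs) \<le> card V" using finite_V card_mono by blast
  then show ?thesis using assms(2) distinct_card unfolding is_path_def by fastforce
qed

lemma is_path_Cons:
  assumes "is_path S vs es" "e \<in> S" "e \<notin> set es" "u \<notin> set vs" "ends e = {u, vs ! 0}"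
  shows "is_path S (u # vs) (e # es)"
  using assms unfolding is_path_def by (auto simp: nth_Cons split: nat.split)

lemma is_path_close_cycle:
  assumes "S \<subseteq> E" "is_path S vs es" "e \<in> S" "e \<notin> set es" "ends e = {vs ! j, vs ! 0}"
    "0 < j" "j < length vs"
  shows "cycle_walk (take (Suc j) vs) (take j es @ [e])"
proof -
  have j: "j \<le> length es" and es: "distinct es" "set es \<subseteq> S"
    and ends_es: "\<forall>i<length es. ends (es ! i) = {vs ! i, vs ! Suc i}"
    using assms(2,7) unfolding is_path_def by auto
  have "ends ((take j es @ [e]) ! i) = {take (Suc j) vs ! i, take (Suc j) vs ! ((i + 1) mod Suc j)}"
    if "i < Suc j" for i
  proof (cases "i < j")
    case True
    then show ?thesis using ends_es j by (auto simp: nth_append)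
  next
    case False
    then have "i = j" using that by simp
    then show ?thesis using assms(5) j by (auto simp: nth_append)
  qed
  moreover have "distinct (take j es @ [e])" using es assms(4) set_take_subset by fastforce
  moreover have "set (take j es @ [e]) \<subseteq> E" using es assms(1,3) set_take_subset by fastforce
  ultimately show ?thesis
    using assms(2,7) j unfolding cycle_walk_def is_path_def by (simp add: min_absorb2)
qed

text \<open>Close up a longest path at its first vertex.\<close>
lemma exists_cycle_walk:
  assumes SE: "S \<subseteq> E" and "e0 \<in> S" and loopless: "\<forall>e\<in>S. tail e \<noteq> head e"
    and deg: "\<forall>e\<in>S. \<forall>w\<in>ends e. \<exists>e'\<in>S. e' \<noteq> e \<and> w \<in> ends e'"
  shows "\<exists>vs es. cycle_walk vs es \<and> set es \<subseteq> S"
proof -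
  have "is_path S [tail e0, head e0] [e0]"
    unfolding is_path_def using assms ends_tail_head by auto
  then obtain vs es where path: "is_path S vs es"
    and longest: "\<And>vs' es'. is_path S vs' es' \<Longrightarrow> length es' \<le> length es"
    using ex_has_greatest_nat[of "\<lambda>(vs, es). is_path S vs es" "([tail e0, head e0], [e0])"
        "\<lambda>(vs, es). length es" "card V"] is_path_length_less_card[OF SE]
    by (auto simp: less_imp_le_nat)
  have es: "length vs = Suc (length es)" "length es \<ge> 1" "distinct vs" "set es \<subseteq> S"
    "\<forall>i<length es. ends (es ! i) = {vs ! i, vs ! Suc i}"
    using path unfolding is_path_def by auto
  then have "es ! 0 \<in> S" "vs ! 0 \<in> ends (es ! 0)" by (auto simp: Suc_le_eq)
  then obtain e where e: "e \<in> S" "e \<noteq> es ! 0" "vs ! 0 \<in> ends e" using deg by blast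
  define u where "u = (if tail e = vs ! 0 then head e else tail e)"
  have ends_e: "ends e = {u, vs ! 0}" and "u \<noteq> vs ! 0"
    using ends_tail_head[of e] e SE loopless unfolding u_def by auto
  have "e \<notin> set es"
  proof
    assume "e \<in> set es"
    then obtain l where l: "l < length es" "e = es ! l" by (metis in_set_conv_nth)
    then have "l \<noteq> 0" using e(2) by metis
    moreover have "vs ! 0 = vs ! l \<or> vs ! 0 = vs ! Suc l" using l e(3) es(5) by auto
    ultimately
    show False using es(1,3) l(1) by (auto simp: nth_eq_iff_index_eq)
  qed
  show ?thesis
  proof (cases "u \<in> set vs")
    case False
    then have "length (e # es) \<le> length es"
      using longest is_path_Cons[OF path e(1) \<open>e \<notin> set es\<close> _ ends_e] by blast
    then show ?thesis by simp
  next
    case True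
    then obtain j where j: "j < length vs" "u = vs ! j" by (metis in_set_conv_nth)
    then have "0 < j" using \<open>u \<noteq> vs ! 0\<close> by (metis gr0I)
    then show ?thesis
      using is_path_close_cycle[OF SE path e(1) \<open>e \<notin> set es\<close> _ _ j(1)] ends_e j(2) e(1) es(4)
        set_take_subset by fastforce
  qed
qed

text \<open>By minimality a witnessing flow is nonzero on all of S, so by conservation every end of an
  edge of S lies on a second edge of S, unless S contains a loop.\<close>
lemma minimal_flow_dependent_is_cycle:
  assumes SE: "S \<subseteq> E" and dep: "flow_dependent S" and minimal: "\<forall>T. T \<subset> S \<longrightarrow> \<not> flow_dependent T"
  shows "is_cycle E ends S"
proof -
  obtain x s0 where x: "flow x" "\<forall>e. e \<notin> S \<longrightarrow> x e = 0" "s0 \<in> S" "x s0 \<noteq> 0"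
    using dep unfolding flow_dependent_def by blast
  have nonzero: "\<forall>s\<in>S. x s \<noteq> 0"
  proof (rule ccontr)
    assume "\<not> (\<forall>s\<in>S. x s \<noteq> 0)"
    then have "{s\<in>S. x s \<noteq> 0} \<subset> S" by blast
    moreover have "flow_dependent {s\<in>S. x s \<noteq> 0}" unfolding flow_dependent_def using x by blast
    ultimately show False using minimal by blast
  qed
  have cycle_in_S: "\<exists>vs es. cycle_walk vs es \<and> set es \<subseteq> S"
  proof (cases "\<exists>e\<in>S. tail e = head e")
    case True
    then obtain e where "e \<in> S" "tail e = head e" by blast
    then have "cycle_walk [tail e] [e]" using ends_tail_head SE unfolding cycle_walk_def by auto
    then show ?thesis using \<open>e \<in> S\<close> by (intro exI[of _ "[tail e]"] exI[of _ "[e]"]) auto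
  next
    case False
    have "\<exists>e'\<in>S. e' \<noteq> e \<and> w \<in> ends e'" if e: "e \<in> S" "w \<in> ends e" for e w
    proof (rule ccontr)
      assume "\<not> (\<exists>e'\<in>S. e' \<noteq> e \<and> w \<in> ends e')"
      then have "(\<Sum>e'\<in>{e}. incidence w e' * x e') = 0"
        using e SE ends_subset by (intro flow_conservation_local[OF x(1,2)]) auto
      moreover have "incidence w e \<noteq> 0" using incidence_neq_0 e SE False by blast
      ultimately show False using nonzero e by simp
    qed
    then show ?thesis using exists_cycle_walk[OF SE x(3)] False by blast
  qed
  then obtain vs es where "cycle_walk vs es" "set es \<subseteq> S" by blast
  moreover have "set es = S"
    using cycle_walk_flow_dependent[OF \<open>cycle_walk vs es\<close>] \<open>set es \<subseteq> S\<close> minimal by blast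
  ultimately show ?thesis unfolding is_cycle_iff_cycle_walk by blast
qed

theorem is_cycle_iff_minimal_flow_dependent:
  assumes "S \<subseteq> E"
  shows "is_cycle E ends S \<longleftrightarrow> flow_dependent S \<and> (\<forall>T. T \<subset> S \<longrightarrow> \<not> flow_dependent T)"
  using assms minimal_flow_dependent_is_cycle cycle_walk_flow_dependent cycle_walk_minimal
  unfolding is_cycle_iff_cycle_walk by blast

end

section \<open>A spanning forest and its fundamental cuts\<close>

lemma funpow_comparable:
  assumes "(f ^^ n) w = x" "(f ^^ m) w = y"
  shows "(\<exists>k. (f ^^ k) x = y) \<or> (\<exists>k. (f ^^ k) y = x)"
proof (cases "n \<le> m")
  case True
  then have "(f ^^ (m - n)) x = y" using assms by (metis funpow_add le_add_diff_inverse2 o_apply)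
  then show ?thesis by blast
next
  case False
  then have "(f ^^ (n - m)) y = x" using assms by (metis funpow_add le_add_diff_inverse2 nat_le_linear o_apply)
  then show ?thesis by blast
qed

context multigraph
begin

definition coboundary :: "'v set \<Rightarrow> 'e \<Rightarrow> real" where
  "coboundary D e = (if tail e \<in> D then 1 else 0) - (if head e \<in> D then 1 else 0)"

lemma coboundary_values: "coboundary D e \<in> {-1, 0, 1}"
  unfolding coboundary_def by auto

lemma coboundary_eq_sum_incidence: "finite D \<Longrightarrow> coboundary D e = (\<Sum>v\<in>D. incidence v e)"
  unfolding coboundary_def incidence_def by (simp add: sum_subtractf)

lemma coboundary_Un_disjoint: "D1 \<inter> D2 = {} \<Longrightarrow> coboundary (D1 \<union> D2) e = coboundary D1 e + coboundary D2 e"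
  unfolding coboundary_def by auto

lemma coboundary_Diff: "D1 \<subseteq> D2 \<Longrightarrow> coboundary (D2 - D1) e = coboundary D2 e - coboundary D1 e"
  using coboundary_Un_disjoint[of D1 "D2 - D1" e] by (simp add: Un_absorb1)

lemma coboundary_laminar:
  assumes "D1 \<subseteq> D2 \<or> D2 \<subseteq> D1 \<or> D1 \<inter> D2 = {}"
  shows "\<exists>t\<in>{-1, 1}. \<forall>e. coboundary D1 e + t * coboundary D2 e \<in> {-1, 0, 1}"
  using assms
proof (elim disjE)
  assume "D1 \<subseteq> D2"
  then have "coboundary D1 e + -1 * coboundary D2 e = - coboundary (D2 - D1) e" for e
    using coboundary_Diff by simp
  then show ?thesis using coboundary_values by (intro bexI[of _ "-1"]) auto
next
  assume "D2 \<subseteq> D1"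
  then have "coboundary D1 e + -1 * coboundary D2 e = coboundary (D1 - D2) e" for e
    using coboundary_Diff by simp
  then show ?thesis using coboundary_values by (intro bexI[of _ "-1"]) auto
next
  assume "D1 \<inter> D2 = {}"
  then have "coboundary D1 e + 1 * coboundary D2 e = coboundary (D1 \<union> D2) e" for e
    using coboundary_Un_disjoint by simp
  then show ?thesis using coboundary_values by (intro bexI[of _ 1]) auto
qed

definition adj :: "('v \<times> 'v) set" where
  "adj = adj_rel E ends"

lemma adj_sym: "(u, v) \<in> adj \<Longrightarrow> (v, u) \<in> adj"
  unfolding adj_def adj_rel_def by auto

lemma adj_in_V: "(u, v) \<in> adj \<Longrightarrow> u \<in> V \<and> v \<in> V"
  unfolding adj_def adj_rel_def using ends_subset by blast

lemma adj_edge: "(u, v) \<in> adj \<Longrightarrow> u \<noteq> v \<Longrightarrow> \<exists>e\<in>E. ends e = {u, v}"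
  unfolding adj_def adj_rel_def using ends_eq_doubleton by blast

lemma adj_rtrancl_sym: "(u, v) \<in> adj\<^sup>* \<Longrightarrow> (v, u) \<in> adj\<^sup>*"
  by (meson adj_sym sym_conv_converse_eq sym_def sym_rtrancl symD)

lemma adj_rtrancl_in_V: "(u, v) \<in> adj\<^sup>* \<Longrightarrow> u \<in> V \<Longrightarrow> v \<in> V"
  by (induction rule: rtrancl_induct) (auto dest: adj_in_V)

text \<open>A spanning forest: every component gets an arbitrary root, and every other vertex a parent
  one step closer to it.\<close>
definition component :: "'v \<Rightarrow> 'v set" where
  "component v = adj\<^sup>* `` {v}"

definition root :: "'v \<Rightarrow> 'v" where
  "root v = (SOME r. r \<in> component v)"

definition roots :: "'v set" where
  "roots = {v\<in>V. root v = v}"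

definition depth :: "'v \<Rightarrow> nat" where
  "depth v = (LEAST n. (v, root v) \<in> adj ^^ n)"

definition parent :: "'v \<Rightarrow> 'v" where
  "parent v = (SOME u. (v, u) \<in> adj \<and> depth u < depth v)"

definition parent_edge :: "'v \<Rightarrow> 'e" where
  "parent_edge v = (SOME e. e \<in> E \<and> ends e = {v, parent v})"

lemma component_eq: "(u, v) \<in> adj\<^sup>* \<Longrightarrow> component u = component v"
  unfolding component_def using adj_rtrancl_sym by (meson Image_singleton_iff rtrancl_trans subsetI subset_antisym)

lemma root_eq: "(u, v) \<in> adj\<^sup>* \<Longrightarrow> root u = root v"
  unfolding root_def using component_eq by simp

lemma root_reachable: "(v, root v) \<in> adj\<^sup>*"
proof -
  have "v \<in> component v" unfolding component_def by auto
  then have "root v \<in> component v" unfolding root_def by (metis someI)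
  then show ?thesis unfolding component_def by auto
qed

lemma root_in_V: "v \<in> V \<Longrightarrow> root v \<in> V"
  using root_reachable adj_rtrancl_in_V by blast

lemma root_root: "root (root v) = root v"
  using root_eq[OF root_reachable] by simp

lemma roots_subset: "roots \<subseteq> V"
  unfolding roots_def by auto

lemma depth_path: "(v, root v) \<in> adj ^^ depth v"
proof -
  obtain n where "(v, root v) \<in> adj ^^ n" using root_reachable rtrancl_power by blast
  then show ?thesis unfolding depth_def by (rule LeastI)
qed

lemma depth_eq_0_iff: "depth v = 0 \<longleftrightarrow> root v = v"
proof
  assume "depth v = 0"
  then show "root v = v" using depth_path[of v] by simp
next
  assume "root v = v"
  then have "(v, root v) \<in> adj ^^ 0" by simp
  then show "depth v = 0" unfolding depth_def by (metis Least_le le_zero_eq)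
qed

lemma parent_closer: assumes "v \<in> V - roots" shows "(v, parent v) \<in> adj" "depth (parent v) < depth v"
proof -
  have "depth v \<noteq> 0" using assms depth_eq_0_iff roots_def by auto
  then obtain m where m: "depth v = Suc m" using not0_implies_Suc by blast
  then obtain u where u: "(v, u) \<in> adj" "(u, root v) \<in> adj ^^ m"
    using depth_path[of v] by (metis relpow_Suc_D2)
  have "root u = root v" using u(1) root_eq by (metis r_into_rtrancl)
  then have "depth u \<le> m" unfolding depth_def using u(2) by (metis Least_le)
  then have "\<exists>u. (v, u) \<in> adj \<and> depth u < depth v" using u m by auto
  then have "(v, parent v) \<in> adj \<and> depth (parent v) < depth v"
    unfolding parent_def by (rule someI_ex)
  then show "(v, parent v) \<in> adj" "depth (parent v) < depth v" by auto
qed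

lemma parent_in_V: "v \<in> V - roots \<Longrightarrow> parent v \<in> V"
  using parent_closer adj_in_V by blast

lemma root_parent: "v \<in> V - roots \<Longrightarrow> root (parent v) = root v"
  using parent_closer(1) root_eq r_into_rtrancl by metis

lemma parent_edge: assumes "v \<in> V - roots" shows "parent_edge v \<in> E" "ends (parent_edge v) = {v, parent v}"
proof -
  have "parent v \<noteq> v" using parent_closer(2)[OF assms] by auto
  then have "\<exists>e. e \<in> E \<and> ends e = {v, parent v}" using adj_edge[OF parent_closer(1)[OF assms]] by metis
  then have "parent_edge v \<in> E \<and> ends (parent_edge v) = {v, parent v}"
    unfolding parent_edge_def by (rule someI_ex)
  then show "parent_edge v \<in> E" "ends (parent_edge v) = {v, parent v}" by auto
qed

lemma parent_edge_inj: "inj_on parent_edge (V - roots)"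
proof (rule inj_onI)
  fix x y assume xy: "x \<in> V - roots" "y \<in> V - roots" "parent_edge x = parent_edge y"
  then have "{x, parent x} = {y, parent y}" using parent_edge(2) by metis
  moreover have "depth (parent x) < depth x" "depth (parent y) < depth y" using parent_closer(2) xy by auto
  ultimately show "x = y" unfolding doubleton_eq_iff by auto
qed

definition up :: "'v \<Rightarrow> 'v" where
  "up v = (if v \<in> V - roots then parent v else v)"

definition descendant :: "'v \<Rightarrow> 'v \<Rightarrow> bool" where
  "descendant w v \<longleftrightarrow> (\<exists>n. (up ^^ n) w = v)"

definition descendants :: "'v \<Rightarrow> 'v set" where
  "descendants v = {w\<in>V. descendant w v}"

definition children :: "'v \<Rightarrow> 'v set" where
  "children v = {c\<in>V - roots. parent c = v}"

lemma descendants_subset: "descendants v \<subseteq> V"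
  unfolding descendants_def by auto

lemma finite_descendants: "finite (descendants v)"
  unfolding descendants_def using finite_V by simp

lemma finite_children: "finite (children v)"
  unfolding children_def using finite_V by simp

lemma root_up: "root (up v) = root v"
  unfolding up_def using root_parent by auto

lemma depth_up_le: "depth (up v) \<le> depth v"
  unfolding up_def using parent_closer(2) by fastforce

lemma root_funpow_up: "root ((up ^^ n) v) = root v"
  by (induction n) (auto simp: root_up)

lemma depth_funpow_up_le: "depth ((up ^^ n) v) \<le> depth v"
  by (induction n) (auto intro: le_trans[OF depth_up_le])

lemma funpow_up_fixed: "v \<notin> V - roots \<Longrightarrow> (up ^^ n) v = v"
  by (induction n) (auto simp: up_def)

lemma descendant_refl: "descendant w w"
  unfolding descendant_def by (metis funpow_0)

lemma descendant_trans: "descendant u v \<Longrightarrow> descendant v w \<Longrightarrow> descendant u w"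
  unfolding descendant_def by (metis funpow_add o_apply)

lemma depth_descendant_le: "descendant w v \<Longrightarrow> depth v \<le> depth w"
  unfolding descendant_def using depth_funpow_up_le by blast

lemma root_descendant: "descendant w v \<Longrightarrow> root v = root w"
  unfolding descendant_def using root_funpow_up by blast

lemma descendant_linear: "descendant w x \<Longrightarrow> descendant w y \<Longrightarrow> descendant x y \<or> descendant y x"
  unfolding descendant_def using funpow_comparable by metis

lemma descendant_iff:
  "descendant w v \<longleftrightarrow> w = v \<or> (w \<in> V - roots \<and> descendant (parent w) v)"
proof
  assume "descendant w v"
  then obtain n where n: "(up ^^ n) w = v" unfolding descendant_def by blast
  show "w = v \<or> (w \<in> V - roots \<and> descendant (parent w) v)"
  proof (cases n)
    case 0
    then show ?thesis using n by simp
  next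
    case (Suc m)
    then have m: "(up ^^ m) (up w) = v" using n by (simp only: funpow_Suc_right o_apply)
    show ?thesis
    proof (cases "w \<in> V - roots")
      case True
      then show ?thesis using m unfolding descendant_def up_def by auto
    next
      case False
      then show ?thesis using n funpow_up_fixed[OF False] by simp
    qed
  qed
next
  assume "w = v \<or> (w \<in> V - roots \<and> descendant (parent w) v)"
  then show "descendant w v"
  proof
    assume "w \<in> V - roots \<and> descendant (parent w) v"
    then obtain n where "w \<in> V - roots" "(up ^^ n) (up w) = v"
      unfolding descendant_def up_def by auto
    then have "(up ^^ Suc n) w = v" by (simp only: funpow_Suc_right o_apply)
    then show ?thesis unfolding descendant_def by blast
  qed (simp add: descendant_refl)
qed

lemma descendant_root: "w \<in> V \<Longrightarrow> descendant w (root w)"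
proof (induction "depth w" arbitrary: w rule: less_induct)
  case less
  show ?case
  proof (cases "w \<in> roots")
    case True
    then show ?thesis using roots_def descendant_refl by auto
  next
    case False
    then have "w \<in> V - roots" using less by auto
    then have "descendant (parent w) (root (parent w))" using less parent_closer parent_in_V by auto
    then show ?thesis using descendant_iff \<open>w \<in> V - roots\<close> root_parent by metis
  qed
qed

lemma descendants_root: "r \<in> roots \<Longrightarrow> descendants r = {w\<in>V. root w = r}"
  unfolding descendants_def roots_def using root_descendant descendant_root by force

lemma descendants_laminar:
  "descendants u \<subseteq> descendants v \<or> descendants v \<subseteq> descendants u \<or> descendants u \<inter> descendants v = {}"
proof (cases "descendants u \<inter> descendants v = {}")
  case False
  then obtain w where "descendant w u" "descendant w v" unfolding descendants_def by auto
  then have "descendant u v \<or> descendant v u" by (rule descendant_linear)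
  then show ?thesis unfolding descendants_def using descendant_trans by blast
qed simp

lemma descendant_child:
  assumes "c \<in> children v"
  shows "descendant c v" "v \<notin> descendants c"
proof -
  show "descendant c v" using assms descendant_iff[of c v] descendant_refl[of v] unfolding children_def by auto
  have "depth v < depth c" using assms parent_closer(2) unfolding children_def by auto
  then show "v \<notin> descendants c" using depth_descendant_le unfolding descendants_def by fastforce
qed

lemma children_descendants_disjoint:
  assumes "c1 \<in> children v" "c2 \<in> children v" "c1 \<noteq> c2"
  shows "descendants c1 \<inter> descendants c2 = {}"
proof (rule ccontr)
  assume "descendants c1 \<inter> descendants c2 \<noteq> {}"
  then obtain w where "descendant w c1" "descendant w c2" unfolding descendants_def by auto
  then have "descendant c1 c2 \<or> descendant c2 c1" by (rule descendant_linear)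
  moreover have "\<not> descendant c c'" if "c \<in> children v" "c' \<in> children v" "c \<noteq> c'" for c c'
  proof
    assume "descendant c c'"
    then have "descendant v c'" using that descendant_iff[of c c'] unfolding children_def by auto
    moreover have "v \<in> V" using that parent_in_V unfolding children_def by auto
    ultimately show False using descendant_child(2)[OF that(2)] unfolding descendants_def by auto
  qed
  ultimately show False using assms by blast
qed

lemma descendant_of_child:
  "a \<in> V \<Longrightarrow> descendant a v \<Longrightarrow> a \<noteq> v \<Longrightarrow> \<exists>c\<in>children v. a \<in> descendants c"
proof (induction "depth a" arbitrary: a rule: less_induct)
  case less
  have a: "a \<in> V - roots" "descendant (parent a) v" using descendant_iff[of a v] less(3,4) by auto
  show ?case
  proof (cases "parent a = v")
    case True
    then show ?thesis using a less(2) descendant_refl unfolding children_def descendants_def by blast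
  next
    case False
    then obtain c where c: "c \<in> children v" "parent a \<in> descendants c"
      using less(1)[of "parent a"] parent_closer(2)[OF a(1)] parent_in_V[OF a(1)] a(2) by blast
    then have "descendant a c" using descendant_iff[of a c] a(1) unfolding descendants_def by auto
    then show ?thesis using c less(2) unfolding descendants_def by blast
  qed
qed

lemma descendants_decomposition:
  "v \<in> V \<Longrightarrow> descendants v = insert v (\<Union>c\<in>children v. descendants c)"
proof (intro equalityI subsetI)
  fix a assume "a \<in> descendants v"
  then show "a \<in> insert v (\<Union>c\<in>children v. descendants c)"
    using descendant_of_child[of a v] unfolding descendants_def by blast
next
  fix a assume "v \<in> V" "a \<in> insert v (\<Union>c\<in>children v. descendants c)"
  then show "a \<in> descendants v"
    using descendant_child(1) descendant_trans descendant_refl unfolding descendants_def by blast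
qed

lemma incidence_eq_coboundary_children:
  assumes "v \<in> V"
  shows "incidence v e = coboundary (descendants v) e - (\<Sum>c\<in>children v. coboundary (descendants c) e)"
proof -
  have "coboundary (descendants v) e = (\<Sum>w\<in>descendants v. incidence w e)"
    by (rule coboundary_eq_sum_incidence[OF finite_descendants])
  also have "\<dots> = (\<Sum>w\<in>insert v (\<Union>c\<in>children v. descendants c). incidence w e)"
    unfolding descendants_decomposition[OF assms] ..
  also have "\<dots> = incidence v e + (\<Sum>w\<in>(\<Union>c\<in>children v. descendants c). incidence w e)"
    using descendant_child(2) finite_children finite_descendants by (subst sum.insert) auto
  also have "\<dots> = incidence v e + (\<Sum>c\<in>children v. coboundary (descendants c) e)"
    using children_descendants_disjoint finite_children finite_descendants
    by (subst sum.UNION_disjoint) (auto simp: coboundary_eq_sum_incidence)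
  finally show ?thesis by simp
qed

lemma components_eq: "components V E ends = component ` V"
  unfolding components_def quotient_def component_def adj_def by auto

lemma card_roots: "card roots = card (components V E ends)"
proof -
  have "inj_on component roots"
  proof (rule inj_onI)
    fix x y assume "x \<in> roots" "y \<in> roots" "component x = component y"
    then have "root x = root y" unfolding root_def by simp
    then show "x = y" using \<open>x \<in> roots\<close> \<open>y \<in> roots\<close> unfolding roots_def by simp
  qed
  moreover have "component ` roots = component ` V"
  proof (intro equalityI subsetI)
    fix K assume "K \<in> component ` roots"
    then show "K \<in> component ` V" using roots_subset by auto
  next
    fix K assume "K \<in> component ` V"
    then obtain v where v: "v \<in> V" "K = component v" by auto
    then have "root v \<in> roots" using root_in_V root_root unfolding roots_def by auto
    moreover have "K = component (root v)" using v(2) component_eq[OF root_reachable] by simp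
    ultimately show "K \<in> component ` roots" by blast
  qed
  ultimately have "card roots = card (component ` V)" by (metis card_image)
  then show ?thesis using components_eq by simp
qed

lemma card_nonroots: "card (V - roots) = graph_rank V E ends"
  unfolding graph_rank_def
  using card_roots card_Diff_subset[OF finite_subset[OF roots_subset finite_V] roots_subset] by simp

text \<open>Row k of the fundamental cut matrix is the coboundary of the subtree hanging from
  the k-th forest edge, signed so that its entry at that edge is 1.\<close>
definition nonroot :: "nat \<Rightarrow> 'v" where
  "nonroot = (SOME h. bij_betw h {..<graph_rank V E ends} (V - roots))"

definition forest_edge :: "nat \<Rightarrow> 'e" where
  "forest_edge k = parent_edge (nonroot k)"

definition forest_edges :: "'e set" where
  "forest_edges = forest_edge ` {..<graph_rank V E ends}"

definition cut_sign :: "nat \<Rightarrow> real" where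
  "cut_sign k = coboundary (descendants (nonroot k)) (forest_edge k)"

definition cut_matrix :: "nat \<Rightarrow> 'e \<Rightarrow> real" where
  "cut_matrix k e = cut_sign k * coboundary (descendants (nonroot k)) e"

lemma bij_nonroot: "bij_betw nonroot {..<graph_rank V E ends} (V - roots)"
proof -
  have "\<exists>h. bij_betw h {..<graph_rank V E ends} (V - roots)"
    using ex_bij_betw_nat_finite[of "V - roots"] finite_V card_nonroots by (simp add: atLeast0LessThan)
  then show ?thesis unfolding nonroot_def by (rule someI_ex)
qed

lemma bij_forest_edge: "bij_betw forest_edge {..<graph_rank V E ends} forest_edges"
proof -
  have "inj_on (parent_edge \<circ> nonroot) {..<graph_rank V E ends}"
    using bij_nonroot parent_edge_inj by (auto simp: bij_betw_def intro: comp_inj_on)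
  then show ?thesis unfolding forest_edges_def forest_edge_def bij_betw_def by (simp add: comp_def)
qed

lemma forest_edges_subset: "forest_edges \<subseteq> E"
  unfolding forest_edges_def forest_edge_def using bij_nonroot parent_edge(1) bij_betwE by fastforce

lemma coboundary_descendants_parent_edge:
  assumes "c \<in> V - roots" "c' \<in> V - roots"
  shows "coboundary (descendants c) (parent_edge c') = (if c' = c then coboundary (descendants c) (parent_edge c) else 0)"
    and "coboundary (descendants c) (parent_edge c) \<in> {-1, 1}"
proof -
  have ends: "{tail (parent_edge c'), head (parent_edge c')} = {c', parent c'}" if "c' \<in> V - roots" for c'
    using ends_tail_head parent_edge that by metis
  show "coboundary (descendants c) (parent_edge c') =
      (if c' = c then coboundary (descendants c) (parent_edge c) else 0)"
  proof (cases "c' = c")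
    case False
    then have "c' \<in> descendants c \<longleftrightarrow> parent c' \<in> descendants c"
      using descendant_iff[of c' c] assms parent_in_V[OF assms(2)] unfolding descendants_def by auto
    then show ?thesis using False ends[OF assms(2)] unfolding coboundary_def doubleton_eq_iff by auto
  qed simp
  have "c \<in> descendants c" using descendant_refl assms(1) unfolding descendants_def by auto
  moreover have "parent c \<notin> descendants c"
    using depth_descendant_le parent_closer(2)[OF assms(1)] unfolding descendants_def by fastforce
  ultimately show "coboundary (descendants c) (parent_edge c) \<in> {-1, 1}"
    using ends[OF assms(1)] unfolding coboundary_def doubleton_eq_iff by auto
qed

lemma nonroot_in: "k < graph_rank V E ends \<Longrightarrow> nonroot k \<in> V - roots"
  using bij_nonroot bij_betwE by blast

lemma cut_sign_values: "k < graph_rank V E ends \<Longrightarrow> cut_sign k \<in> {-1, 1}"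
  unfolding cut_sign_def forest_edge_def using coboundary_descendants_parent_edge(2) nonroot_in by blast

lemma cut_matrix_forest_edge:
  assumes "i < graph_rank V E ends" "k < graph_rank V E ends"
  shows "cut_matrix i (forest_edge k) = (if i = k then 1 else 0)"
proof -
  have "nonroot k = nonroot i \<longleftrightarrow> k = i"
    using bij_nonroot assms unfolding bij_betw_def inj_on_def by auto
  then show ?thesis
    using coboundary_descendants_parent_edge(1)[OF nonroot_in[OF assms(1)] nonroot_in[OF assms(2)]]
      cut_sign_values[OF assms(1)]
    unfolding cut_matrix_def cut_sign_def forest_edge_def by auto
qed

lemma cut_matrix_values: "k < graph_rank V E ends \<Longrightarrow> cut_matrix k e \<in> {-1, 0, 1}"
  using cut_sign_values[of k] coboundary_values[of "descendants (nonroot k)" e]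
  unfolding cut_matrix_def by auto

lemma standard_form_cut_matrix: "standard_form (graph_rank V E ends) cut_matrix E forest_edges forest_edge"
  unfolding standard_form_def
  using forest_edges_subset bij_forest_edge cut_matrix_forest_edge cut_matrix_values by blast

lemma coboundary_descendants_root:
  assumes "r \<in> roots" "e \<in> E"
  shows "coboundary (descendants r) e = 0"
proof -
  have "root (tail e) = root (head e)"
  proof (cases "tail e = head e")
    case False
    then have "(tail e, head e) \<in> adj"
      unfolding adj_def adj_rel_def using ends_tail_head[OF assms(2)] assms(2) by blast
    then show ?thesis using root_eq by blast
  qed simp
  then show ?thesis
    unfolding coboundary_def descendants_root[OF assms(1)] using tail_in_V head_in_V assms(2) by auto
qed

lemma flow_coboundary:
  assumes "flow x" "D \<subseteq> V"
  shows "(\<Sum>e\<in>E. coboundary D e * x e) = 0"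
proof -
  have "finite D" using assms(2) finite_V finite_subset by blast
  then have "(\<Sum>e\<in>E. coboundary D e * x e) = (\<Sum>v\<in>D. \<Sum>e\<in>E. incidence v e * x e)"
    by (simp add: coboundary_eq_sum_incidence sum_distrib_right sum.swap[of _ E])
  also have "\<dots> = 0" using assms unfolding flow_def by (auto intro: sum.neutral)
  finally show ?thesis .
qed

lemma cut_matrix_row_sum:
  "(\<Sum>e\<in>E. cut_matrix k e * x e) = cut_sign k * (\<Sum>e\<in>E. coboundary (descendants (nonroot k)) e * x e)"
  unfolding cut_matrix_def by (simp add: sum_distrib_left mult.assoc)

lemma in_kernel_cut_matrix_iff_flow: "in_kernel (graph_rank V E ends) cut_matrix E x \<longleftrightarrow> flow x"
proof
  assume "flow x"
  then show "in_kernel (graph_rank V E ends) cut_matrix E x"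
    unfolding in_kernel_def cut_matrix_row_sum using flow_coboundary descendants_subset by simp
next
  assume kernel: "in_kernel (graph_rank V E ends) cut_matrix E x"
  have coboundary_kernel: "(\<Sum>e\<in>E. coboundary (descendants c) e * x e) = 0" if c: "c \<in> V" for c
  proof (cases "c \<in> roots")
    case True
    then show ?thesis using coboundary_descendants_root by simp
  next
    case False
    then obtain k where k: "k < graph_rank V E ends" "nonroot k = c"
      using c bij_nonroot unfolding bij_betw_def by force
    then have "cut_sign k * (\<Sum>e\<in>E. coboundary (descendants c) e * x e) = 0"
      using kernel k(1) unfolding in_kernel_def cut_matrix_row_sum k(2)[symmetric] by simp
    then show ?thesis using cut_sign_values[OF k(1)] by auto
  qed
  show "flow x"
    unfolding flow_def
  proof
    fix v assume "v \<in> V"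
    then have "(\<Sum>e\<in>E. incidence v e * x e) = (\<Sum>e\<in>E. coboundary (descendants v) e * x e)
        - (\<Sum>c\<in>children v. \<Sum>e\<in>E. coboundary (descendants c) e * x e)"
      using incidence_eq_coboundary_children
      by (simp add: left_diff_distrib sum_subtractf sum_distrib_right sum.swap[of _ E])
    also have "\<dots> = 0"
      using coboundary_kernel \<open>v \<in> V\<close> unfolding children_def by simp
    finally show "(\<Sum>e\<in>E. incidence v e * x e) = 0" .
  qed
qed

lemma cols_dependent_cut_matrix_iff:
  assumes "T \<subseteq> E"
  shows "cols_dependent (graph_rank V E ends) cut_matrix T \<longleftrightarrow> flow_dependent T"
proof -
  have sum_T: "(\<Sum>s\<in>T. c s * cut_matrix i s) = (\<Sum>e\<in>E. cut_matrix i e * x e)"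
    if "\<forall>e. x e = (if e \<in> T then c e else 0)" for c x i
    using that assms by (intro sum.mono_neutral_cong_left[OF finite_E]) auto
  show ?thesis
  proof
    assume "cols_dependent (graph_rank V E ends) cut_matrix T"
    then obtain c where c: "\<exists>s\<in>T. c s \<noteq> 0" "\<forall>i<graph_rank V E ends. (\<Sum>s\<in>T. c s * cut_matrix i s) = 0"
      unfolding cols_dependent_def by blast
    define x where "x e = (if e \<in> T then c e else 0)" for e
    have "flow x"
      using c(2) sum_T[of x c] unfolding in_kernel_cut_matrix_iff_flow[symmetric] in_kernel_def x_def by simp
    moreover have "\<forall>e. e \<notin> T \<longrightarrow> x e = 0" "\<exists>s\<in>T. x s \<noteq> 0" using c(1) by (auto simp: x_def)
    ultimately show "flow_dependent T" unfolding flow_dependent_def by blast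
  next
    assume "flow_dependent T"
    then obtain x where x: "flow x" "\<forall>e. e \<notin> T \<longrightarrow> x e = 0" "\<exists>s\<in>T. x s \<noteq> 0"
      unfolding flow_dependent_def by blast
    then have "\<forall>e. x e = (if e \<in> T then x e else 0)" by auto
    then show "cols_dependent (graph_rank V E ends) cut_matrix T"
      using x(1,3) sum_T[of x x] unfolding cols_dependent_def in_kernel_cut_matrix_iff_flow[symmetric] in_kernel_def
      by auto
  qed
qed

theorem represents_cut_matrix: "represents (graph_rank V E ends) cut_matrix E (is_cycle E ends)"
  unfolding represents_def matrix_circuit_def
  using is_cycle_iff_minimal_flow_dependent cols_dependent_cut_matrix_iff
  by (meson psubset_imp_subset subset_trans)

end

section \<open>Momentum rows\<close>

lemma ternary_minus_indicator:
  fixes f :: "'a \<Rightarrow> real"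
  assumes "\<forall>e. f e \<in> {-1, 0, 1}"
  shows "\<exists>\<beta>. \<beta> \<noteq> 0 \<and> (\<forall>e. f e - \<beta> * (if e = b then 1 else 0) \<in> {-1, 0, 1})"
proof -
  define \<beta> where "\<beta> = (if f b = 0 then 1 else f b)"
  have "\<beta> \<noteq> 0" unfolding \<beta>_def by simp
  moreover have "f e - \<beta> * (if e = b then 1 else 0) \<in> {-1, 0, 1}" for e
    using assms unfolding \<beta>_def by (cases "e = b") auto
  ultimately show ?thesis by blast
qed

context multigraph
begin

text \<open>In the kernel, the row of a forest edge a expresses y a through the non-forest edges of its
  fundamental cut, which gives a row vanishing on the forest and pairing with y to -y a.\<close>
definition momentum_row :: "'e \<Rightarrow> 'e \<Rightarrow> real" where
  "momentum_row a e =
     (\<Sum>k<graph_rank V E ends. if forest_edge k = a then cut_matrix k e else 0) - (if e = a then 1 else 0)"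

lemma momentum_row_forest_edge:
  assumes "k < graph_rank V E ends"
  shows "momentum_row (forest_edge k) e = cut_matrix k e - (if e = forest_edge k then 1 else 0)"
proof -
  have "forest_edge k' = forest_edge k \<longleftrightarrow> k' = k" if "k' < graph_rank V E ends" for k'
    using bij_forest_edge assms that unfolding bij_betw_def inj_on_def by auto
  then have "(\<Sum>k'<graph_rank V E ends. if forest_edge k' = forest_edge k then cut_matrix k' e else 0) =
      (\<Sum>k'<graph_rank V E ends. if k' = k then cut_matrix k' e else 0)"
    by (intro sum.cong) auto
  then show ?thesis unfolding momentum_row_def using assms by simp
qed

lemma momentum_row_nonforest: "a \<notin> forest_edges \<Longrightarrow> momentum_row a e = - (if e = a then 1 else 0)"
  unfolding momentum_row_def forest_edges_def by (auto intro!: sum.neutral)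

lemma momentum_row_eq_0: "e \<in> forest_edges \<Longrightarrow> momentum_row a e = 0"
proof -
  assume "e \<in> forest_edges"
  then obtain k where k: "k < graph_rank V E ends" "e = forest_edge k" unfolding forest_edges_def by auto
  show ?thesis
  proof (cases "a \<in> forest_edges")
    case True
    then obtain k' where "k' < graph_rank V E ends" "a = forest_edge k'" unfolding forest_edges_def by auto
    then show ?thesis
      using momentum_row_forest_edge cut_matrix_forest_edge k bij_forest_edge
      unfolding bij_betw_def inj_on_def by auto
  next
    case False
    then show ?thesis using momentum_row_nonforest \<open>e \<in> forest_edges\<close> by auto
  qed
qed

lemma momentum_row_values: "momentum_row a e \<in> {-1, 0, 1}"
proof (cases "a \<in> forest_edges")
  case True
  then obtain k where k: "k < graph_rank V E ends" "a = forest_edge k" unfolding forest_edges_def by auto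
  then show ?thesis
    using momentum_row_forest_edge[OF k(1)] cut_matrix_forest_edge[OF k(1) k(1)] cut_matrix_values[OF k(1)]
    by (cases "e = a") auto
next
  case False
  then show ?thesis using momentum_row_nonforest by simp
qed

lemma momentum_row_kernel:
  assumes "a \<in> E" "in_kernel (graph_rank V E ends) cut_matrix E y"
  shows "(\<Sum>e\<in>E. momentum_row a e * y e) = - y a"
proof -
  have "(\<Sum>e\<in>E. (\<Sum>k<graph_rank V E ends. if forest_edge k = a then cut_matrix k e else 0) * y e) =
      (\<Sum>k<graph_rank V E ends. \<Sum>e\<in>E. (if forest_edge k = a then cut_matrix k e else 0) * y e)"
    unfolding sum_distrib_right by (rule sum.swap)
  also have "\<dots> = 0"
  proof -
    have "(\<Sum>e\<in>E. (if forest_edge k = a then cut_matrix k e else 0) * y e) = 0"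
      if "k < graph_rank V E ends" for k
      using assms(2) that unfolding in_kernel_def by (cases "forest_edge k = a") auto
    then show ?thesis by (auto intro: sum.neutral)
  qed
  finally have forest_part: "(\<Sum>e\<in>E. (\<Sum>k<graph_rank V E ends. if forest_edge k = a then cut_matrix k e else 0) * y e) = 0" .
  have "(\<Sum>e\<in>E. (if e = a then 1 else 0) * y e) = (\<Sum>e\<in>E. if e = a then y e else 0)"
    by (intro sum.cong) auto
  also have "\<dots> = y a" using assms(1) finite_E by simp
  finally show ?thesis
    using forest_part unfolding momentum_row_def left_diff_distrib sum_subtractf by simp
qed

lemma momentum_pair_coefficients_forest_nonforest:
  assumes "a \<in> forest_edges" "b \<notin> forest_edges"
  shows "\<exists>\<alpha> \<beta>. \<alpha> \<noteq> 0 \<and> \<beta> \<noteq> 0 \<and> (\<forall>e. \<alpha> * momentum_row a e + \<beta> * momentum_row b e \<in> {-1, 0, 1})"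
proof -
  obtain \<beta> where "\<beta> \<noteq> 0" "\<forall>e. momentum_row a e - \<beta> * (if e = b then 1 else 0) \<in> {-1, 0, 1}"
    using ternary_minus_indicator[of "momentum_row a" b] momentum_row_values by blast
  then show ?thesis using momentum_row_nonforest[OF assms(2)] by (intro exI[of _ 1] exI[of _ \<beta>]) auto
qed

text \<open>Two forest edges: the subtrees cut off by them are nested or disjoint, so a signed sum
  of their coboundaries is again a coboundary.\<close>
lemma momentum_pair_coefficients_forest:
  assumes "k1 < graph_rank V E ends" "k2 < graph_rank V E ends"
  defines "a \<equiv> forest_edge k1" and "b \<equiv> forest_edge k2"
  shows "\<exists>\<alpha> \<beta>. \<alpha> \<noteq> 0 \<and> \<beta> \<noteq> 0 \<and> (\<forall>e. \<alpha> * momentum_row a e + \<beta> * momentum_row b e \<in> {-1, 0, 1})"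
proof -
  define D1 where "D1 = descendants (nonroot k1)"
  define D2 where "D2 = descendants (nonroot k2)"
  obtain t :: real where t: "t \<in> {-1, 1}" "\<forall>e. coboundary D1 e + t * coboundary D2 e \<in> {-1, 0, 1}"
    using coboundary_laminar[OF descendants_laminar] unfolding D1_def D2_def by blast
  have "cut_sign k1 * momentum_row a e + t * cut_sign k2 * momentum_row b e \<in> {-1, 0, 1}" for e
  proof (cases "e \<in> forest_edges")
    case True
    then show ?thesis using momentum_row_eq_0 by simp
  next
    case False
    then have "e \<noteq> a" "e \<noteq> b" using assms(1,2) unfolding a_def b_def forest_edges_def by auto
    then have "momentum_row a e = cut_sign k1 * coboundary D1 e" "momentum_row b e = cut_sign k2 * coboundary D2 e"
      using momentum_row_forest_edge[OF assms(1)] momentum_row_forest_edge[OF assms(2)]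
      unfolding a_def b_def D1_def D2_def cut_matrix_def by simp_all
    then show ?thesis
      using t(2) cut_sign_values[OF assms(1)] cut_sign_values[OF assms(2)] by auto
  qed
  moreover have "cut_sign k1 \<noteq> 0" "t * cut_sign k2 \<noteq> 0"
    using cut_sign_values[OF assms(1)] cut_sign_values[OF assms(2)] t(1) by auto
  ultimately show ?thesis by blast
qed

lemma momentum_pair_coefficients:
  assumes "a \<noteq> b"
  shows "\<exists>\<alpha> \<beta>. \<alpha> \<noteq> 0 \<and> \<beta> \<noteq> 0 \<and> (\<forall>e. \<alpha> * momentum_row a e + \<beta> * momentum_row b e \<in> {-1, 0, 1})"
proof (cases "a \<in> forest_edges"; cases "b \<in> forest_edges")
  assume "a \<in> forest_edges" "b \<in> forest_edges"
  then show ?thesis using momentum_pair_coefficients_forest unfolding forest_edges_def by auto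
next
  assume "a \<in> forest_edges" "b \<notin> forest_edges"
  then show ?thesis by (rule momentum_pair_coefficients_forest_nonforest)
next
  assume "a \<notin> forest_edges" "b \<in> forest_edges"
  then show ?thesis using momentum_pair_coefficients_forest_nonforest[of b a] by (metis add.commute)
next
  assume "a \<notin> forest_edges" "b \<notin> forest_edges"
  then show ?thesis using momentum_row_nonforest assms by (intro exI[of _ 1] exI[of _ 1]) auto
qed

lemma momentum_pair_row:
  assumes "a \<in> E" "b \<in> E" "a \<noteq> b"
  shows "\<exists>u. pair_row (graph_rank V E ends) cut_matrix E forest_edges a b u"
proof -
  obtain \<alpha> \<beta> where \<alpha>\<beta>: "\<alpha> \<noteq> 0" "\<beta> \<noteq> 0" "\<forall>e. \<alpha> * momentum_row a e + \<beta> * momentum_row b e \<in> {-1, 0, 1}"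
    using momentum_pair_coefficients[OF assms(3)] by blast
  define u where "u e = \<alpha> * momentum_row a e + \<beta> * momentum_row b e" for e
  have "(\<Sum>e\<in>E. u e * y e) = - \<alpha> * y a + - \<beta> * y b"
    if y: "in_kernel (graph_rank V E ends) cut_matrix E y" for y
  proof -
    have "(\<Sum>e\<in>E. u e * y e) = \<alpha> * (\<Sum>e\<in>E. momentum_row a e * y e) + \<beta> * (\<Sum>e\<in>E. momentum_row b e * y e)"
      unfolding u_def by (simp add: algebra_simps sum.distrib sum_distrib_left)
    then show ?thesis using momentum_row_kernel[OF assms(1) y] momentum_row_kernel[OF assms(2) y] by simp
  qed
  moreover have "\<forall>e\<in>forest_edges. u e = 0" unfolding u_def using momentum_row_eq_0 by simp
  moreover have "- \<alpha> \<noteq> 0" "- \<beta> \<noteq> 0" using \<alpha>\<beta>(1,2) by auto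
  ultimately have "pair_row (graph_rank V E ends) cut_matrix E forest_edges a b u"
    unfolding pair_row_def u_def using \<alpha>\<beta>(3) by blast
  then show ?thesis by blast
qed

end

theorem theorem3p1:
  fixes V :: "'v set" and E :: "'e set" and ends :: "'e \<Rightarrow> 'v set" and P :: "'e set set"
  assumes "finite_graph V E ends"
    and "\<forall>p\<in>P. \<exists>e1 e2. p = {e1, e2} \<and> e1 \<noteq> e2 \<and> e1 \<in> E \<and> e2 \<in> E"
  shows "\<exists>(r::nat) (A :: nat \<Rightarrow> 'e + nat \<Rightarrow> real) (E1 :: 'e set) (\<sigma> :: nat \<Rightarrow> 'e).
     r \<le> card P \<and>
     E1 \<subseteq> E \<and> bij_betw \<sigma> {..<graph_rank V E ends} E1 \<and>
     (\<forall>k < graph_rank V E ends. \<forall>i < graph_rank V E ends + r.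
        A i (Inl (\<sigma> k)) = (if i = k then 1 else 0)) \<and>
     (\<forall>j < r. \<forall>i < graph_rank V E ends + r.
        A i (Inr j) = (if i = graph_rank V E ends + j then 1 else 0)) \<and>
     (\<forall>e \<in> E - E1. \<forall>i < graph_rank V E ends + r. A i (Inl e) \<in> {-1, 0, 1}) \<and>
     represents (graph_rank V E ends) (\<lambda>i e. A i (Inl e)) E (is_cycle E ends) \<and>
     (\<forall>e1 e2. {e1, e2} \<in> P \<longrightarrow>
        (\<exists>g \<in> Inl ` E \<union> Inr ` {..<r}. \<exists>\<alpha> \<beta> :: real. \<alpha> \<noteq> 0 \<and> \<beta> \<noteq> 0 \<and>
           (\<forall>x :: 'e + nat \<Rightarrow> real.
              (\<forall>i < graph_rank V E ends + r. (\<Sum>c \<in> Inl ` E \<union> Inr ` {..<r}. A i c * x c) = 0)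
              \<longrightarrow> x g = \<alpha> * x (Inl e1) + \<beta> * x (Inl e2))))"
proof -
  interpret multigraph V E ends by (rule multigraph.intro) (rule assms(1))
  have "P \<subseteq> Pow E" using assms(2) by auto
  then have "finite P" by (rule finite_subset) (simp add: finite_E)
  have "\<forall>p\<in>P. \<exists>a b u. p = {a, b} \<and> pair_row (graph_rank V E ends) cut_matrix E forest_edges a b u"
    using assms(2) momentum_pair_row by metis
  then show ?thesis
    by (rule ternary_coextension[OF finite_E \<open>finite P\<close> standard_form_cut_matrix represents_cut_matrix])
qed

end
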